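(* For all positive integers $n\geq 2$ and $t$, the Roman domination number of $S(K_n,t)$ is $$\gamma_R(S(K_n,t))=\begin{cases}2\left\lceil\frac{n^t}{n+1}\right\rceil & \text{if } t \text{ is odd},\\[2pt] 2\left\lceil\frac{n^t}{n+1}\right\rceil-1 & \text{if } t \text{ is even}.\end{cases}$$
   Context: For a positive integer $n$ let $[n]=\{1,\dots,n\}$. For positive integers $n,t$, the Sierpiński graph $S(K_n,t)$ is the simple graph with vertex set $[n]^t$ (words $v_1v_2\cdots v_t$ with $v_i\in[n]$), in which $u_1\cdots u_t$ and $v_1\cdots v_t$ are adjacent if and only if there is $s\in[t]$ with $u_j=v_j$ for all $j<s$, $u_s\neq v_s$, and $u_j=v_s$ and $v_j=u_s$ for all $j>s$. A Roman dominating function on a graph $G=(V,E)$ is a function $f:V\to\{0,1,2\}$ such that every vertex $u$ with $f(u)=0$ has a neighbor $v$ with $f(v)=2$. Its weight is $\sum_{v\in V}f(v)$, and the Roman domination number $\gamma_R(G)$ is the minimum weight of a Roman dominating function on $G$. *)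

theory Defs
  imports Complex_Main
begin

definition roman_dominating :: "'a set \<Rightarrow> ('a \<Rightarrow> 'a \<Rightarrow> bool) \<Rightarrow> ('a \<Rightarrow> nat) \<Rightarrow> bool" where
  "roman_dominating V E f \<longleftrightarrow>
     (\<forall>v\<in>V. f v \<in> {0,1,2}) \<and>
     (\<forall>u\<in>V. f u = 0 \<longrightarrow> (\<exists>v\<in>V. E u v \<and> f v = 2))"

definition roman_weight :: "'a set \<Rightarrow> ('a \<Rightarrow> nat) \<Rightarrow> nat" where
  "roman_weight V f = (\<Sum>v\<in>V. f v)"

definition roman_domination_number :: "'a set \<Rightarrow> ('a \<Rightarrow> 'a \<Rightarrow> bool) \<Rightarrow> nat" where
  "roman_domination_number V E = Inf {roman_weight V f | f. roman_dominating V E f}"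

(* Sierpinski graph S(K_n,t): vertices are words of length t over {1..n},
   represented as lists; positions are 0-based here (s = 0..t-1). *)
definition sierp_vertices :: "nat \<Rightarrow> nat \<Rightarrow> nat list set" where
  "sierp_vertices n t = {w. length w = t \<and> set w \<subseteq> {1..n}}"

definition sierp_adj :: "nat \<Rightarrow> nat list \<Rightarrow> nat list \<Rightarrow> bool" where
  "sierp_adj t u v \<longleftrightarrow>
     (\<exists>s<t. (\<forall>j<s. u ! j = v ! j) \<and> u ! s \<noteq> v ! s \<and>
            (\<forall>j. s < j \<and> j < t \<longrightarrow> u ! j = v ! s \<and> v ! j = u ! s))"

end

theory Submission
  imports Defs
begin

text \<open>A vertex of S(K_n,t) has at most n neighbours, so a Roman dominating function of weight w
  satisfies (n + 1) w \<ge> 2 n^t. Conversely, S(K_n,m+1) consists of n copies i S(K_n,m) joined by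
  the bridge edges i a\<dots>a \<sim> a i\<dots>i, and gluing near-perfect codes of the copies along the
  bridges yields, by induction on t, a set D that dominates all vertices except at most one
  extreme vertex x and satisfies (n + 1) |D| \<le> n^t + 1 (t odd, x absent) or
  (n + 1) |D| + 1 \<le> n^t (t even). Weight 2 on D and 1 on x then attains \<lceil>2 n^t / (n + 1)\<rceil>,
  which is the stated value because n \<equiv> -1 (mod n + 1).\<close>

definition dominates_except :: "'a set \<Rightarrow> ('a \<Rightarrow> 'a \<Rightarrow> bool) \<Rightarrow> 'a set \<Rightarrow> 'a set \<Rightarrow> bool" where
  "dominates_except V E D X \<longleftrightarrow> D \<subseteq> V \<and> (\<forall>v\<in>V - X. v \<in> D \<or> (\<exists>d\<in>D. E v d))"

lemma roman_weight_eq_card: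
  assumes "finite V" and "\<forall>v\<in>V. f v \<in> {0,1,2}"
  shows "roman_weight V f = card {v\<in>V. f v = 1} + 2 * card {v\<in>V. f v = 2}"
proof -
  have "roman_weight V f = (\<Sum>v\<in>V. (if f v = 1 then 1 else 0) + (if f v = 2 then 2 else 0))"
    unfolding roman_weight_def by (rule sum.cong) (use assms(2) in auto)
  also have "\<dots> = card {v\<in>V. f v = 1} + 2 * card {v\<in>V. f v = 2}"
    using assms(1) by (simp add: sum.distrib sum.If_cases Int_def)
  finally show ?thesis .
qed

lemma roman_weight_lower_bound:
  assumes "finite V" and f: "roman_dominating V E f" and "\<Delta> \<ge> 1"
    and deg: "\<And>w. w \<in> V \<Longrightarrow> card {v\<in>V. E v w} \<le> \<Delta>"
  shows "2 * card V \<le> (\<Delta> + 1) * roman_weight V f"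
proof -
  define V0 V1 V2 where "V0 = {v\<in>V. f v = 0}" and "V1 = {v\<in>V. f v = 1}" and "V2 = {v\<in>V. f v = 2}"
  have range: "\<forall>v\<in>V. f v \<in> {0,1,2}" using f by (simp add: roman_dominating_def)
  have fin: "finite V0" "finite V1" "finite V2" using assms(1) by (simp_all add: V0_def V1_def V2_def)
  have "V = V0 \<union> V1 \<union> V2" using range by (auto simp: V0_def V1_def V2_def)
  also have "card \<dots> = card V0 + card V1 + card V2"
  proof -
    have "V0 \<inter> V1 = {}" "(V0 \<union> V1) \<inter> V2 = {}" by (auto simp: V0_def V1_def V2_def)
    then show ?thesis using fin by (simp add: card_Un_disjoint)
  qed
  finally have card_V: "card V = card V0 + card V1 + card V2" .
  have "V0 \<subseteq> (\<Union>w\<in>V2. {v\<in>V. E v w})"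
    using f by (auto simp: V0_def V2_def roman_dominating_def)
  then have "card V0 \<le> card (\<Union>w\<in>V2. {v\<in>V. E v w})"
    using fin(3) assms(1) by (intro card_mono) auto
  also have "\<dots> \<le> (\<Sum>w\<in>V2. card {v\<in>V. E v w})"
    using fin(3) by (rule card_UN_le)
  also have "\<dots> \<le> \<Delta> * card V2"
    using sum_bounded_above[of V2 "\<lambda>w. card {v\<in>V. E v w}" \<Delta>] deg by (auto simp: V2_def mult.commute)
  finally have "card V0 \<le> \<Delta> * card V2" .
  moreover have "2 * card V1 \<le> (\<Delta> + 1) * card V1"
    using \<open>\<Delta> \<ge> 1\<close> by simp
  moreover have "(\<Delta> + 1) * roman_weight V f = (\<Delta> + 1) * card V1 + 2 * card V2 + 2 * (\<Delta> * card V2)"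
    using roman_weight_eq_card[OF assms(1) range] by (simp add: V1_def V2_def algebra_simps)
  ultimately show ?thesis using card_V by linarith
qed

lemma roman_dominating_of_dominates_except:
  assumes "finite V" and "finite X" and "dominates_except V E D X"
  obtains f where "roman_dominating V E f" and "roman_weight V f \<le> 2 * card D + card X"
proof
  let ?f = "\<lambda>v. if v \<in> D then 2 else if v \<in> X then 1 else 0 :: nat"
  show "roman_dominating V E ?f"
    using assms(3) by (fastforce simp: roman_dominating_def dominates_except_def)
  have "roman_weight V ?f \<le> (\<Sum>v\<in>V. (if v \<in> D then 2 else 0) + (if v \<in> X then 1 else 0))"
    unfolding roman_weight_def by (rule sum_mono) auto
  also have "\<dots> = 2 * card (V \<inter> D) + card (V \<inter> X)"
    using assms(1) by (simp add: sum.distrib sum.If_cases)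
  also have "\<dots> \<le> 2 * card D + card X"
    using assms
    by (intro add_mono mult_le_mono2 card_mono) (auto simp: dominates_except_def intro: finite_subset)
  finally show "roman_weight V ?f \<le> 2 * card D + card X" .
qed

definition sierp_adj_at :: "nat \<Rightarrow> nat list \<Rightarrow> nat list \<Rightarrow> nat \<Rightarrow> bool" where
  "sierp_adj_at t v w s \<longleftrightarrow> s < t \<and> (\<forall>j<s. v ! j = w ! j) \<and> v ! s \<noteq> w ! s \<and>
     (\<forall>j. s < j \<and> j < t \<longrightarrow> v ! j = w ! s \<and> w ! j = v ! s)"

lemma sierp_adj_iff_adj_at: "sierp_adj t v w \<longleftrightarrow> (\<exists>s. sierp_adj_at t v w s)"
  by (auto simp: sierp_adj_def sierp_adj_at_def)

lemma Cons_in_sierp_vertices_iff: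
  "i # u \<in> sierp_vertices n (Suc m) \<longleftrightarrow> i \<in> {1..n} \<and> u \<in> sierp_vertices n m"
  by (auto simp: sierp_vertices_def)

lemma sierp_vertices_SucE:
  assumes "v \<in> sierp_vertices n (Suc m)"
  obtains i u where "v = i # u" "i \<in> {1..n}" "u \<in> sierp_vertices n m"
  using assms by (cases v) (auto simp: sierp_vertices_def)

lemma sierp_vertices_eq_lists: "sierp_vertices n t = {xs. set xs \<subseteq> {1..n} \<and> length xs = t}"
  by (auto simp: sierp_vertices_def)

lemma finite_sierp_vertices: "finite (sierp_vertices n t)"
  by (simp add: sierp_vertices_eq_lists finite_lists_length_eq)

lemma card_sierp_vertices: "card (sierp_vertices n t) = n ^ t"
  by (simp add: sierp_vertices_eq_lists card_lists_length_eq)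

lemma sierp_adj_Cons: "sierp_adj m u v \<Longrightarrow> sierp_adj (Suc m) (i # u) (i # v)"
  unfolding sierp_adj_iff_adj_at
proof (elim exE)
  fix s assume "sierp_adj_at m u v s"
  then have "sierp_adj_at (Suc m) (i # u) (i # v) (Suc s)"
    by (auto simp: sierp_adj_at_def less_Suc_eq_0_disj)
  then show "\<exists>s. sierp_adj_at (Suc m) (i # u) (i # v) s" ..
qed

lemma sierp_adj_bridge: "i \<noteq> a \<Longrightarrow> sierp_adj (Suc m) (i # replicate m a) (a # replicate m i)"
  unfolding sierp_adj_iff_adj_at
  by (rule exI[of _ 0]) (auto simp: sierp_adj_at_def gr0_conv_Suc)

lemma sierp_adj_at_no_earlier_position:
  assumes "sierp_adj_at t v w s" "sierp_adj_at t v' w s'" "s < s'" "s' < t - 1"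
  shows False
proof -
  have "w ! s' = v ! s" "w ! (t - 1) = v ! s" using assms(1,3,4) by (simp_all add: sierp_adj_at_def)
  moreover have "w ! (t - 1) = v' ! s'" "v' ! s' \<noteq> w ! s'" using assms(2,4) by (simp_all add: sierp_adj_at_def)
  ultimately show False by simp
qed

lemma sierp_adj_at_unique:
  assumes adj: "sierp_adj_at t v w s" "sierp_adj_at t v' w s'" and "s < t - 1" "s' < t - 1"
    and "length v = t" "length v' = t"
  shows "v = v'"
proof -
  have "s' = s"
    using sierp_adj_at_no_earlier_position[OF adj] sierp_adj_at_no_earlier_position[OF adj(2,1)]
      assms(3,4) by (metis linorder_neqE_nat)
  show ?thesis
  proof (rule nth_equalityI)
    show "length v = length v'" using assms(5,6) by simp
    fix j assume "j < length v"
    then have "j < t" using assms(5) by simp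
    consider "j < s" | "j = s" | "s < j" by linarith
    then show "v ! j = v' ! j"
    proof cases
      case 1
      then show ?thesis using adj \<open>s' = s\<close> by (simp add: sierp_adj_at_def)
    next
      case 2
      have "w ! (t - 1) = v ! s" using adj(1) assms(3) by (simp add: sierp_adj_at_def)
      moreover have "w ! (t - 1) = v' ! s"
        using adj(2) assms(4) \<open>s' = s\<close> by (simp add: sierp_adj_at_def)
      ultimately show ?thesis using 2 by simp
    next
      case 3
      then show ?thesis using adj \<open>s' = s\<close> \<open>j < t\<close> by (simp add: sierp_adj_at_def)
    qed
  qed
qed

lemma sierp_adj_at_last:
  assumes "sierp_adj_at t v w (t - 1)" "length v = t" "length w = t"
  shows "v = take (t - 1) w @ [v ! (t - 1)]"
proof -
  have "t \<noteq> 0" using assms(1) by (simp add: sierp_adj_at_def)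
  then have "v = take (t - 1) v @ [v ! (t - 1)]"
    using assms(2) by (metis Suc_diff_1 lessI not_gr_zero take_Suc_conv_app_nth take_all_iff order_refl)
  also have "take (t - 1) v = take (t - 1) w"
    using assms by (intro nth_equalityI) (auto simp: sierp_adj_at_def)
  finally show ?thesis .
qed

lemma last_in_sierp_vertices:
  assumes "w \<in> sierp_vertices n t" "t \<ge> 1"
  shows "w ! (t - 1) \<in> {1..n}"
proof -
  have "w ! (t - 1) \<in> set w" using assms by (simp add: sierp_vertices_def)
  then show ?thesis using assms(1) by (auto simp: sierp_vertices_def)
qed

lemma card_sierp_adj_at_last_le:
  assumes "w \<in> sierp_vertices n t" "t \<ge> 1"
  shows "card {v\<in>sierp_vertices n t. sierp_adj_at t v w (t - 1)} \<le> n - 1"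
proof -
  let ?N = "{v\<in>sierp_vertices n t. sierp_adj_at t v w (t - 1)}"
  have "?N \<subseteq> (\<lambda>i. take (t - 1) w @ [i]) ` ({1..n} - {w ! (t - 1)})"
  proof
    fix v assume v: "v \<in> ?N"
    then have "v = take (t - 1) w @ [v ! (t - 1)]"
      using assms(1) sierp_adj_at_last by (auto simp: sierp_vertices_def)
    moreover have "v ! (t - 1) \<in> {1..n}" using v last_in_sierp_vertices[OF _ assms(2)] by blast
    then have "v ! (t - 1) \<in> {1..n} - {w ! (t - 1)}" using v by (simp add: sierp_adj_at_def)
    ultimately show "v \<in> (\<lambda>i. take (t - 1) w @ [i]) ` ({1..n} - {w ! (t - 1)})" by blast
  qed
  then have "card ?N \<le> card ({1..n} - {w ! (t - 1)})"
    by (meson card_image_le card_mono finite_Diff finite_atLeastAtMost finite_imageI order_trans)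
  also have "\<dots> = n - 1" using last_in_sierp_vertices[OF assms] by simp
  finally show ?thesis .
qed

lemma card_sierp_adj_at_before_last_le:
  "card {v\<in>sierp_vertices n t. \<exists>s<t - 1. sierp_adj_at t v w s} \<le> 1"
proof -
  have "finite {v\<in>sierp_vertices n t. \<exists>s<t - 1. sierp_adj_at t v w s}"
    by (auto intro: finite_subset[OF _ finite_sierp_vertices])
  then show ?thesis
    using sierp_adj_at_unique by (auto simp: card_le_Suc0_iff_eq sierp_vertices_def)
qed

lemma card_sierp_neighbours_le:
  assumes "w \<in> sierp_vertices n t"
  shows "card {v\<in>sierp_vertices n t. sierp_adj t v w} \<le> n"
proof (cases "t = 0")
  case True
  then show ?thesis by (simp add: sierp_adj_def)
next
  case False
  let ?V = "sierp_vertices n t"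
  let ?N1 = "{v\<in>?V. sierp_adj_at t v w (t - 1)}" and ?N2 = "{v\<in>?V. \<exists>s<t - 1. sierp_adj_at t v w s}"
  have "{v\<in>?V. sierp_adj t v w} \<subseteq> ?N1 \<union> ?N2"
  proof
    fix v assume "v \<in> {v\<in>?V. sierp_adj t v w}"
    then obtain s where "v \<in> ?V" "sierp_adj_at t v w s" by (auto simp: sierp_adj_iff_adj_at)
    moreover have "s < t" using \<open>sierp_adj_at t v w s\<close> by (simp add: sierp_adj_at_def)
    then have "s = t - 1 \<or> s < t - 1" by linarith
    ultimately show "v \<in> ?N1 \<union> ?N2" by auto
  qed
  then have "card {v\<in>?V. sierp_adj t v w} \<le> card (?N1 \<union> ?N2)"
    by (intro card_mono) (auto intro: finite_subset[OF _ finite_sierp_vertices])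
  also have "\<dots> \<le> card ?N1 + card ?N2" by (rule card_Un_le)
  also have "\<dots> \<le> (n - 1) + 1"
    using False card_sierp_adj_at_last_le[OF assms] card_sierp_adj_at_before_last_le
    by (intro add_mono) simp_all
  also have "\<dots> = n" using last_in_sierp_vertices[OF assms] False by simp
  finally show ?thesis .
qed

definition extreme_vertices :: "nat \<Rightarrow> nat \<Rightarrow> nat list set" where
  "extreme_vertices n m = (\<lambda>i. replicate m i) ` {1..n}"

lemma replicate_in_extreme_vertices: "i \<in> {1..n} \<Longrightarrow> replicate m i \<in> extreme_vertices n m"
  unfolding extreme_vertices_def by (rule imageI)

lemma card_extreme_vertices: "m \<ge> 1 \<Longrightarrow> card (extreme_vertices n m) = n"
  unfolding extreme_vertices_def by (subst card_image) (auto simp: inj_on_def)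

text \<open>A perfect code of the vertices outside X whose extreme vertices are exactly Y satisfies
  the counting condition with equality: extreme vertices have n - 1 neighbours, all others n.\<close>
definition sparse_dominating :: "nat \<Rightarrow> nat \<Rightarrow> nat list set \<Rightarrow> nat list set \<Rightarrow> bool" where
  "sparse_dominating n m X Y \<longleftrightarrow>
     (\<exists>D. dominates_except (sierp_vertices n m) (sierp_adj m) D X \<and> Y \<subseteq> D \<and>
          (n + 1) * card D + card X \<le> n ^ m + card Y)"

text \<open>Gluing step: S(K_n,m+1) is the union of the copies i S(K_n,m), and a vertex i u left
  undominated in its copy may instead be reached over the bridge edge i a\<dots>a \<sim> a i\<dots>i.\<close>
lemma dominates_except_sierp_Suc:
  assumes dom: "\<And>i. i \<in> {1..n} \<Longrightarrow> dominates_except (sierp_vertices n m) (sierp_adj m) (D i) (X i)"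
    and bridge: "\<And>i u. i \<in> {1..n} \<Longrightarrow> u \<in> X i \<Longrightarrow>
       i # u \<in> X' \<or> (\<exists>a\<in>{1..n}. a \<noteq> i \<and> u = replicate m a \<and> replicate m i \<in> D a)"
  shows "dominates_except (sierp_vertices n (Suc m)) (sierp_adj (Suc m)) (\<Union>i\<in>{1..n}. Cons i ` D i) X'"
  unfolding dominates_except_def
proof (intro conjI ballI)
  let ?D' = "\<Union>i\<in>{1..n}. Cons i ` D i"
  have Cons_in_D': "i # d \<in> ?D'" if "i \<in> {1..n}" "d \<in> D i" for i d
    using that by blast
  show "?D' \<subseteq> sierp_vertices n (Suc m)"
    using dom by (fastforce simp: dominates_except_def Cons_in_sierp_vertices_iff)
  fix v assume "v \<in> sierp_vertices n (Suc m) - X'"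
  then obtain i u where v: "v = i # u" "i \<in> {1..n}" "u \<in> sierp_vertices n m" "i # u \<notin> X'"
    by (auto elim: sierp_vertices_SucE)
  show "v \<in> ?D' \<or> (\<exists>d\<in>?D'. sierp_adj (Suc m) v d)"
  proof (cases "u \<in> X i")
    case False
    then have "u \<in> D i \<or> (\<exists>d\<in>D i. sierp_adj m u d)"
      using dom[OF v(2)] v(3) by (simp add: dominates_except_def)
    then show ?thesis using v(1) Cons_in_D'[OF v(2)] sierp_adj_Cons by fast
  next
    case True
    then obtain a where a: "a \<in> {1..n}" "i \<noteq> a" "u = replicate m a" "replicate m i \<in> D a"
      using bridge[OF v(2) True] v(4) by fastforce
    then have "a # replicate m i \<in> ?D'" using Cons_in_D' by blast
    moreover have "sierp_adj (Suc m) v (a # replicate m i)"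
      using sierp_adj_bridge[OF a(2)] v(1) a(3) by simp
    ultimately show ?thesis by blast
  qed
qed

lemma card_UN_Cons_le: "finite I \<Longrightarrow> card (\<Union>i\<in>I. Cons i ` D i) \<le> (\<Sum>i\<in>I. card (D i))"
  using card_UN_le[of I "\<lambda>i. Cons i ` D i"] by (simp add: card_image)

lemma sparse_dominating_Suc:
  fixes X Y :: "nat \<Rightarrow> nat list set"
  assumes sparse: "\<And>i. i \<in> {1..n} \<Longrightarrow> sparse_dominating n m (X i) (Y i)"
    and bridge: "\<And>i u. i \<in> {1..n} \<Longrightarrow> u \<in> X i \<Longrightarrow>
       i # u \<in> X' \<or> (\<exists>a\<in>{1..n}. a \<noteq> i \<and> u = replicate m a \<and> replicate m i \<in> Y a)"
    and Y': "Y' \<subseteq> (\<Union>i\<in>{1..n}. Cons i ` Y i)"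
    and count: "card X' + (\<Sum>i=1..n. card (Y i)) \<le> card Y' + (\<Sum>i=1..n. card (X i))"
  shows "sparse_dominating n (Suc m) X' Y'"
proof -
  have "\<forall>i\<in>{1..n}. \<exists>D. dominates_except (sierp_vertices n m) (sierp_adj m) D (X i) \<and> Y i \<subseteq> D \<and>
          (n + 1) * card D + card (X i) \<le> n ^ m + card (Y i)"
    using sparse by (simp add: sparse_dominating_def)
  then obtain D where
    D: "\<And>i. i \<in> {1..n} \<Longrightarrow> dominates_except (sierp_vertices n m) (sierp_adj m) (D i) (X i)"
      "\<And>i. i \<in> {1..n} \<Longrightarrow> Y i \<subseteq> D i"
      "\<And>i. i \<in> {1..n} \<Longrightarrow> (n + 1) * card (D i) + card (X i) \<le> n ^ m + card (Y i)"
    by metis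
  define D' where "D' = (\<Union>i\<in>{1..n}. Cons i ` D i)"
  have "dominates_except (sierp_vertices n (Suc m)) (sierp_adj (Suc m)) D' X'"
    unfolding D'_def using D(1,2) bridge by (intro dominates_except_sierp_Suc) blast+
  moreover have "(\<Union>i\<in>{1..n}. Cons i ` Y i) \<subseteq> D'"
    unfolding D'_def using D(2) by (intro UN_mono image_mono) auto
  then have "Y' \<subseteq> D'" using Y' by blast
  moreover have "(n + 1) * card D' + card X' \<le> n ^ Suc m + card Y'"
  proof -
    have "(n + 1) * card D' + (\<Sum>i=1..n. card (X i)) \<le>
        (n + 1) * (\<Sum>i=1..n. card (D i)) + (\<Sum>i=1..n. card (X i))"
      unfolding D'_def using card_UN_Cons_le[of "{1..n}" D]
      by (simp only: add_le_cancel_right mult_le_cancel1) simp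
    also have "\<dots> = (\<Sum>i=1..n. (n + 1) * card (D i) + card (X i))"
      by (simp add: sum.distrib sum_distrib_left)
    also have "\<dots> \<le> (\<Sum>i=1..n. n ^ m + card (Y i))"
      using D(3) by (rule sum_mono)
    also have "\<dots> = n ^ Suc m + (\<Sum>i=1..n. card (Y i))"
      by (simp add: sum.distrib)
    finally show ?thesis using count by linarith
  qed
  ultimately show ?thesis unfolding sparse_dominating_def by blast
qed

lemma sparse_dominating_Suc_extremes_in:
  assumes "\<And>a. a \<in> {1..n} \<Longrightarrow> sparse_dominating n m {} {replicate m a}"
  shows "sparse_dominating n (Suc m) {} (extreme_vertices n (Suc m))"
proof (rule sparse_dominating_Suc[where X = "\<lambda>_. {}" and Y = "\<lambda>i. {replicate m i}"])
  show "extreme_vertices n (Suc m) \<subseteq> (\<Union>i\<in>{1..n}. Cons i ` {replicate m i})"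
    by (auto simp: extreme_vertices_def)
  show "card {} + (\<Sum>i=1..n. card {replicate m i}) \<le>
      card (extreme_vertices n (Suc m)) + (\<Sum>i=1..n. card ({} :: nat list set))"
    by (simp add: card_extreme_vertices)
qed (use assms in auto)

lemma sparse_dominating_Suc_extremes_out:
  assumes "\<And>a. a \<in> {1..n} \<Longrightarrow> sparse_dominating n m {replicate m a} {}"
  shows "sparse_dominating n (Suc m) (extreme_vertices n (Suc m)) {}"
proof (rule sparse_dominating_Suc[where X = "\<lambda>i. {replicate m i}" and Y = "\<lambda>_. {}"])
  show "card (extreme_vertices n (Suc m)) + (\<Sum>i=1..n. card ({} :: nat list set)) \<le>
      card {} + (\<Sum>i=1..n. card {replicate m i})"
    by (simp add: card_extreme_vertices)
qed (use assms in \<open>auto simp: extreme_vertices_def\<close>)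

lemma sparse_dominating_Suc_extreme_in:
  assumes "m \<ge> 1" "a \<in> {1..n}"
    and "sparse_dominating n m {} (extreme_vertices n m)" "sparse_dominating n m {replicate m a} {}"
  shows "sparse_dominating n (Suc m) {} {replicate (Suc m) a}"
proof (rule sparse_dominating_Suc[where X = "\<lambda>i. if i = a then {} else {replicate m a}"
      and Y = "\<lambda>i. if i = a then extreme_vertices n m else {}"])
  fix i u assume i: "i \<in> {1..n}" and "u \<in> (if i = a then {} else {replicate m a})"
  then have "i \<noteq> a" "u = replicate m a" by (simp_all split: if_splits)
  moreover have "replicate m i \<in> extreme_vertices n m" using i by (rule replicate_in_extreme_vertices)
  ultimately show "i # u \<in> {} \<or> (\<exists>j\<in>{1..n}. j \<noteq> i \<and> u = replicate m j \<and>
      replicate m i \<in> (if j = a then extreme_vertices n m else {}))"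
    using assms(2) by auto
next
  show "{replicate (Suc m) a} \<subseteq>
      (\<Union>i\<in>{1..n}. Cons i ` (if i = a then extreme_vertices n m else {}))"
    using assms(2) replicate_in_extreme_vertices[OF assms(2)] by auto
  show "card {} + (\<Sum>i=1..n. card (if i = a then extreme_vertices n m else {})) \<le>
      card {replicate (Suc m) a} + (\<Sum>i=1..n. card (if i = a then {} else {replicate m a}))"
    using assms(1,2)
    by (simp add: if_distrib[of card] sum.If_cases Diff_eq[symmetric] card_extreme_vertices)
qed (use assms in \<open>auto simp: extreme_vertices_def\<close>)

lemma sparse_dominating_Suc_extreme_out:
  assumes "m \<ge> 1" "a \<in> {1..n}"
    and "sparse_dominating n m (extreme_vertices n m) {}" "sparse_dominating n m {} {replicate m a}"
  shows "sparse_dominating n (Suc m) {replicate (Suc m) a} {}"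
proof (rule sparse_dominating_Suc[where X = "\<lambda>i. if i = a then extreme_vertices n m else {}"
      and Y = "\<lambda>i. if i = a then {} else {replicate m a}"])
  fix i u assume "i \<in> {1..n}" "u \<in> (if i = a then extreme_vertices n m else {})"
  then obtain j where "i = a" "j \<in> {1..n}" "u = replicate m j"
    by (auto simp: extreme_vertices_def split: if_splits)
  then show "i # u \<in> {replicate (Suc m) a} \<or> (\<exists>j\<in>{1..n}. j \<noteq> i \<and> u = replicate m j \<and>
      replicate m i \<in> (if j = a then {} else {replicate m a}))"
    by (cases "j = a") auto
next
  show "card {replicate (Suc m) a} + (\<Sum>i=1..n. card (if i = a then {} else {replicate m a})) \<le>
      card {} + (\<Sum>i=1..n. card (if i = a then extreme_vertices n m else {}))"
    using assms(1,2)
    by (simp add: if_distrib[of card] sum.If_cases Diff_eq[symmetric] card_extreme_vertices)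
qed (use assms in \<open>auto simp: extreme_vertices_def\<close>)

lemma sparse_dominating_one_extreme_in:
  assumes "a \<in> {1..n}"
  shows "sparse_dominating n 1 {} {[a]}"
proof -
  have "dominates_except (sierp_vertices n 1) (sierp_adj 1) {[a]} {}"
    unfolding dominates_except_def
  proof (intro conjI ballI)
    show "{[a]} \<subseteq> sierp_vertices n 1" using assms by (simp add: sierp_vertices_def)
    fix v assume "v \<in> sierp_vertices n 1 - {}"
    then obtain i where "v = [i]" by (auto simp: sierp_vertices_def length_Suc_conv)
    then show "v \<in> {[a]} \<or> (\<exists>d\<in>{[a]}. sierp_adj 1 v d)"
      using sierp_adj_bridge[of i a 0] by auto
  qed
  then show ?thesis by (auto simp: sparse_dominating_def)
qed

lemma sparse_dominating_one_extremes_out: "sparse_dominating n 1 (extreme_vertices n 1) {}"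
proof -
  have "dominates_except (sierp_vertices n 1) (sierp_adj 1) {} (extreme_vertices n 1)"
    by (auto simp: dominates_except_def extreme_vertices_def sierp_vertices_def length_Suc_conv)
  then show ?thesis by (auto simp: sparse_dominating_def card_extreme_vertices)
qed

lemma sparse_dominating_sierp:
  assumes "m \<ge> 1"
  shows "if odd m
    then (\<forall>a\<in>{1..n}. sparse_dominating n m {} {replicate m a}) \<and>
         sparse_dominating n m (extreme_vertices n m) {}
    else sparse_dominating n m {} (extreme_vertices n m) \<and>
         (\<forall>a\<in>{1..n}. sparse_dominating n m {replicate m a} {})"
  using assms
proof (induction m rule: nat_induct_at_least)
  case base
  then show ?case using sparse_dominating_one_extreme_in sparse_dominating_one_extremes_out by simp
next
  case (Suc m)
  show ?case
  proof (cases "odd m")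
    case True
    then show ?thesis using Suc
      by (auto simp del: replicate_Suc
          intro: sparse_dominating_Suc_extremes_in sparse_dominating_Suc_extreme_out)
  next
    case False
    then show ?thesis using Suc
      by (auto simp del: replicate_Suc
          intro: sparse_dominating_Suc_extreme_in sparse_dominating_Suc_extremes_out)
  qed
qed

lemma add_one_dvd_power_minus_sign: "(int n + 1) dvd int n ^ t - (-1) ^ t"
proof (induction t)
  case (Suc t)
  have "int n ^ Suc t - (-1) ^ Suc t = int n * (int n ^ t - (-1) ^ t) + (int n + 1) * (-1) ^ t"
    by (simp add: algebra_simps)
  with Suc show ?case by simp
qed simp

lemma ceiling_add_divide:
  fixes q r :: real
  assumes "0 < r" "r \<le> q"
  shows "\<lceil>(q * of_int k + r) / q\<rceil> = k + 1"
proof (rule ceiling_unique)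
  have "(q * of_int k + r) / q = of_int k + r / q" using assms by (simp add: field_simps)
  moreover have "0 < r / q" "r / q \<le> 1" using assms by simp_all
  ultimately show "of_int (k + 1) - 1 < (q * of_int k + r) / q"
    and "(q * of_int k + r) / q \<le> of_int (k + 1)" by simp_all
qed

lemma sierp_roman_upper_bound:
  assumes "n \<ge> 2" "t \<ge> 1"
  obtains f where "roman_dominating (sierp_vertices n t) (sierp_adj t) f"
    and "(n + 1) * roman_weight (sierp_vertices n t) f < 2 * n ^ t + (n + 1)"
proof -
  have "1 \<in> {1..n}" using assms(1) by simp
  then have "if odd t then sparse_dominating n t {} {replicate t 1}
      else sparse_dominating n t {replicate t 1} {}"
    using sparse_dominating_sierp[OF assms(2), of n] by (simp split: if_splits)
  then obtain X Y where sparse: "sparse_dominating n t X Y"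
    and XY: "(X = {} \<and> card Y = 1) \<or> (card X = 1 \<and> Y = {})"
    by (cases "odd t") auto
  then obtain D where D: "dominates_except (sierp_vertices n t) (sierp_adj t) D X"
    and count: "(n + 1) * card D + card X \<le> n ^ t + card Y"
    by (auto simp: sparse_dominating_def)
  have "finite X" using XY by (auto intro: card_ge_0_finite)
  with D obtain f where f: "roman_dominating (sierp_vertices n t) (sierp_adj t) f"
    and w: "roman_weight (sierp_vertices n t) f \<le> 2 * card D + card X"
    using roman_dominating_of_dominates_except finite_sierp_vertices by metis
  have "(n + 1) * roman_weight (sierp_vertices n t) f \<le> 2 * ((n + 1) * card D) + (n + 1) * card X"
    using mult_le_mono2[OF w, of "n + 1"] by (simp add: algebra_simps)
  also have "\<dots> < 2 * n ^ t + (n + 1)"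
    using XY count assms(1) by (elim disjE) simp_all
  finally show ?thesis using f that by blast
qed

lemma roman_domination_number_sierp:
  assumes "n \<ge> 2" "t \<ge> 1"
  shows "int (roman_domination_number (sierp_vertices n t) (sierp_adj t)) =
    \<lceil>2 * real (n ^ t) / real (n + 1)\<rceil>"
proof -
  let ?V = "sierp_vertices n t" and ?E = "sierp_adj t"
  let ?W = "{roman_weight ?V f | f. roman_dominating ?V ?E f}"
  have lower: "\<lceil>2 * real (n ^ t) / real (n + 1)\<rceil> \<le> int (roman_weight ?V f)"
    if "roman_dominating ?V ?E f" for f
  proof -
    have "2 * n ^ t \<le> (n + 1) * roman_weight ?V f"
      using roman_weight_lower_bound[OF finite_sierp_vertices that, of n] assms(1)
        card_sierp_neighbours_le by (simp add: card_sierp_vertices)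
    then have "2 * real (n ^ t) \<le> real (n + 1) * real (roman_weight ?V f)"
      by (metis of_nat_le_iff of_nat_mult of_nat_numeral)
    then show ?thesis by (simp add: ceiling_le_iff divide_le_eq mult.commute)
  qed
  obtain f where f: "roman_dominating ?V ?E f"
    and "(n + 1) * roman_weight ?V f < 2 * n ^ t + (n + 1)"
    using sierp_roman_upper_bound[OF assms] .
  then have "real ((n + 1) * roman_weight ?V f) < real (2 * n ^ t + (n + 1))"
    by (simp only: of_nat_less_iff)
  then have "real (n + 1) * (real (roman_weight ?V f) - 1) < 2 * real (n ^ t)"
    by (simp add: algebra_simps)
  then have "int (roman_weight ?V f) \<le> \<lceil>2 * real (n ^ t) / real (n + 1)\<rceil>"
    by (simp add: le_ceiling_iff less_divide_eq mult.commute)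
  with lower[OF f] have min: "int (roman_weight ?V f) = \<lceil>2 * real (n ^ t) / real (n + 1)\<rceil>"
    by linarith
  have "roman_domination_number ?V ?E = roman_weight ?V f"
    unfolding roman_domination_number_def
    using f lower min by (intro cInf_eq_minimum) fastforce+
  then show ?thesis using min by simp
qed

lemma ceiling_double_power_over_succ:
  fixes n t :: nat
  assumes "n \<ge> 2"
  shows "\<lceil>2 * real (n ^ t) / real (n + 1)\<rceil> =
    (if odd t then 2 * \<lceil>real (n ^ t) / real (n + 1)\<rceil>
     else 2 * \<lceil>real (n ^ t) / real (n + 1)\<rceil> - 1)"
proof -
  let ?q = "real (n + 1)"
  obtain k where "int n ^ t - (-1) ^ t = (int n + 1) * k"
    using add_one_dvd_power_minus_sign by (rule dvdE)
  then have "real_of_int (int n ^ t - (-1) ^ t) = real_of_int ((int n + 1) * k)" by simp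
  then have k: "real (n ^ t) = ?q * of_int k + (-1) ^ t" by (simp add: algebra_simps)
  show ?thesis
  proof (cases "odd t")
    case True
    then have e1: "real (n ^ t) = ?q * of_int (k - 1) + real n"
      and e2: "2 * real (n ^ t) = ?q * of_int (2 * k - 1) + (real n - 1)"
      using k by (simp_all add: algebra_simps)
    have "\<lceil>real (n ^ t) / ?q\<rceil> = k - 1 + 1"
      unfolding e1 by (rule ceiling_add_divide) (use assms in simp_all)
    moreover have "\<lceil>2 * real (n ^ t) / ?q\<rceil> = 2 * k - 1 + 1"
      unfolding e2 by (rule ceiling_add_divide) (use assms in simp_all)
    ultimately show ?thesis using True by simp
  next
    case False
    then have e1: "real (n ^ t) = ?q * of_int k + 1"
      and e2: "2 * real (n ^ t) = ?q * of_int (2 * k) + 2"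
      using k by (simp_all add: algebra_simps)
    have "\<lceil>real (n ^ t) / ?q\<rceil> = k + 1"
      unfolding e1 by (rule ceiling_add_divide) (use assms in simp_all)
    moreover have "\<lceil>2 * real (n ^ t) / ?q\<rceil> = 2 * k + 1"
      unfolding e2 by (rule ceiling_add_divide) (use assms in simp_all)
    ultimately show ?thesis using False by simp
  qed
qed

theorem theorem3p2:
  fixes n t :: nat
  assumes "n \<ge> 2" and "t \<ge> 1"
  shows "int (roman_domination_number (sierp_vertices n t) (sierp_adj t)) =
           (if odd t then 2 * \<lceil>real (n ^ t) / real (n + 1)\<rceil>
            else 2 * \<lceil>real (n ^ t) / real (n + 1)\<rceil> - 1)"
  using roman_domination_number_sierp[OF assms] ceiling_double_power_over_succ[OF assms(1)]
  by simp

end
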